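(* Let $\mathbf P$ be a CFSM protocol with the recognizable channel property and communication graph $(N,E)$. A global state $(S',C')$ is not reachable if and only if there is a family of recognizable relations $\mathbf R(S)\subseteq\prod_{\xi\in E}M_\xi^*$, $S\in\prod_{j\in N}K_j$, consistent with respect to $\mathbf P$, such that $C^0\in\mathbf R(S^0)$ and $C'\notin\mathbf R(S')$.
   Context: A CFSM protocol $\mathbf P$ has a finite directed communication graph $G=(N,E)$ (edge $\xi$ has tail $-\xi$, head $+\xi$), pairwise disjoint finite message sets $M_\xi$, and for each $j\in N$ a finite state machine $F_j=(K_j,\Sigma_j,T_j,h_j)$: finite state set $K_j$, initial state $h_j$, alphabet $\Sigma_j=\{+b: b\in M_\xi,\ j=+\xi\}\cup\{-b: b\in M_\xi,\ j=-\xi\}$, transitions $T_j\subseteq K_j\times\Sigma_j\times K_j$ ($+b$ = receive, $-b$ = send). A composite state is $S=(p_j:j\in N)$; a channel content is $C=(x_\xi:\xi\in E)$, $x_\xi\in M_\xi^*$; global states are pairs $(S,C)$; $C^0$ has all components empty; $S^0=(h_j:j\in N)$; $(S^0,C^0)$ is the initial global state. A step: some machine $F_i$ takes $p_i\xrightarrow{-b}q_i$ with $b\in M_\beta$, $i=-\beta$, appending $b$ to the end of $x_\beta$; or takes $p_i\xrightarrow{+b}q_i$ with $b\in M_\beta$, $i=+\beta$, provided $x_\beta$ begins with $b$, removing it; all else unchanged. $\vdash^*$ means reachability by finitely many steps; reachable means $(S^0,C^0)\vdash^*$ it. A relation in $\prod_{\xi\in E}M_\xi^*$ is recognizable if it is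 a finite union of sets $\prod_\xi L_\xi$ with $L_\xi\subseteq M_\xi^*$ regular. $\mathbf P$ has the recognizable channel property if $\mathbf L(S)=\{C:(S^0,C^0)\vdash^*(S,C)\}$ is recognizable for every $S$. A family $\mathbf R(S)$ is consistent if $(S,C)\vdash^*(S',C')$ and $C\in\mathbf R(S)$ imply $C'\in\mathbf R(S')$. *)

theory Defs
  imports "HOL-Library.FuncSet"
begin

(* Actions of a machine: Recv b is "+b", Send b is "-b". *)
datatype 'm action = Recv 'm | Send 'm

(* A CFSM protocol. Edge xi has tail (sender) ctail xi = -xi and head (receiver) chead xi = +xi. *)
record ('n, 'e, 'm, 's) cfsm =
  nodes :: "'n set"
  edges :: "'e set"
  ctail :: "'e \<Rightarrow> 'n"
  chead :: "'e \<Rightarrow> 'n"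
  msgs  :: "'e \<Rightarrow> 'm set"
  states :: "'n \<Rightarrow> 's set"
  trans :: "'n \<Rightarrow> ('s \<times> 'm action \<times> 's) set"
  init  :: "'n \<Rightarrow> 's"

definition alphabet :: "('n, 'e, 'm, 's) cfsm \<Rightarrow> 'n \<Rightarrow> 'm action set" where
  "alphabet P j =
     {Recv b | b \<xi>. \<xi> \<in> edges P \<and> b \<in> msgs P \<xi> \<and> chead P \<xi> = j} \<union>
     {Send b | b \<xi>. \<xi> \<in> edges P \<and> b \<in> msgs P \<xi> \<and> ctail P \<xi> = j}"

definition wf_cfsm :: "('n, 'e, 'm, 's) cfsm \<Rightarrow> bool" where
  "wf_cfsm P \<longleftrightarrow>
     finite (nodes P) \<and> finite (edges P) \<and>
     (\<forall>\<xi>\<in>edges P. ctail P \<xi> \<in> nodes P \<and> chead P \<xi> \<in> nodes P) \<and>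
     (\<forall>\<xi>\<in>edges P. finite (msgs P \<xi>)) \<and>
     (\<forall>\<xi>\<in>edges P. \<forall>\<eta>\<in>edges P. \<xi> \<noteq> \<eta> \<longrightarrow> msgs P \<xi> \<inter> msgs P \<eta> = {}) \<and>
     (\<forall>j\<in>nodes P. finite (states P j) \<and> init P j \<in> states P j \<and>
        trans P j \<subseteq> states P j \<times> alphabet P j \<times> states P j)"

definition comp_states :: "('n, 'e, 'm, 's) cfsm \<Rightarrow> ('n \<Rightarrow> 's) set" where
  "comp_states P = (\<Pi>\<^sub>E j\<in>nodes P. states P j)"

definition chan_contents :: "('n, 'e, 'm, 's) cfsm \<Rightarrow> ('e \<Rightarrow> 'm list) set" where
  "chan_contents P = (\<Pi>\<^sub>E \<xi>\<in>edges P. lists (msgs P \<xi>))"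

definition S0 :: "('n, 'e, 'm, 's) cfsm \<Rightarrow> 'n \<Rightarrow> 's" where
  "S0 P = restrict (init P) (nodes P)"

definition C0 :: "('n, 'e, 'm, 's) cfsm \<Rightarrow> 'e \<Rightarrow> 'm list" where
  "C0 P = restrict (\<lambda>_. []) (edges P)"

definition step :: "('n, 'e, 'm, 's) cfsm \<Rightarrow>
    (('n \<Rightarrow> 's) \<times> ('e \<Rightarrow> 'm list)) \<Rightarrow> (('n \<Rightarrow> 's) \<times> ('e \<Rightarrow> 'm list)) \<Rightarrow> bool" where
  "step P g g' \<longleftrightarrow> (case g of (S, C) \<Rightarrow> case g' of (S', C') \<Rightarrow>
     (\<exists>i\<in>nodes P. \<exists>\<beta>\<in>edges P. \<exists>b\<in>msgs P \<beta>. \<exists>q.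
        (i = ctail P \<beta> \<and> (S i, Send b, q) \<in> trans P i \<and>
           S' = S(i := q) \<and> C' = C(\<beta> := C \<beta> @ [b])) \<or>
        (i = chead P \<beta> \<and> (S i, Recv b, q) \<in> trans P i \<and>
           C \<beta> \<noteq> [] \<and> hd (C \<beta>) = b \<and>
           S' = S(i := q) \<and> C' = C(\<beta> := tl (C \<beta>)))))"

abbreviation steps :: "('n, 'e, 'm, 's) cfsm \<Rightarrow>
    (('n \<Rightarrow> 's) \<times> ('e \<Rightarrow> 'm list)) \<Rightarrow> (('n \<Rightarrow> 's) \<times> ('e \<Rightarrow> 'm list)) \<Rightarrow> bool" where
  "steps P \<equiv> (step P)\<^sup>*\<^sup>*"

definition reachable :: "('n, 'e, 'm, 's) cfsm \<Rightarrow> ('n \<Rightarrow> 's) \<Rightarrow> ('e \<Rightarrow> 'm list) \<Rightarrow> bool" where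
  "reachable P S C \<longleftrightarrow> steps P (S0 P, C0 P) (S, C)"

definition reach_chans :: "('n, 'e, 'm, 's) cfsm \<Rightarrow> ('n \<Rightarrow> 's) \<Rightarrow> ('e \<Rightarrow> 'm list) set" where
  "reach_chans P S = {C. reachable P S C}"

definition regular_lang :: "'a set \<Rightarrow> 'a list set \<Rightarrow> bool" where
  "regular_lang A L \<longleftrightarrow>
     (\<exists>(Q :: nat set) \<delta> q0 F. finite Q \<and> q0 \<in> Q \<and> (\<forall>q\<in>Q. \<forall>a\<in>A. \<delta> q a \<in> Q) \<and> F \<subseteq> Q \<and>
        L = {w \<in> lists A. foldl \<delta> q0 w \<in> F})"

definition recognizable :: "('n, 'e, 'm, 's) cfsm \<Rightarrow> ('e \<Rightarrow> 'm list) set \<Rightarrow> bool" where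
  "recognizable P R \<longleftrightarrow>
     (\<exists>Ls :: ('e \<Rightarrow> 'm list set) list.
        (\<forall>L\<in>set Ls. \<forall>\<xi>\<in>edges P. regular_lang (msgs P \<xi>) (L \<xi>)) \<and>
        R = (\<Union>L\<in>set Ls. \<Pi>\<^sub>E \<xi>\<in>edges P. L \<xi>))"

definition recognizable_channel_property :: "('n, 'e, 'm, 's) cfsm \<Rightarrow> bool" where
  "recognizable_channel_property P \<longleftrightarrow> (\<forall>S\<in>comp_states P. recognizable P (reach_chans P S))"

definition consistent :: "('n, 'e, 'm, 's) cfsm \<Rightarrow> (('n \<Rightarrow> 's) \<Rightarrow> ('e \<Rightarrow> 'm list) set) \<Rightarrow> bool" where
  "consistent P R \<longleftrightarrow>
     (\<forall>S\<in>comp_states P. \<forall>C\<in>chan_contents P. \<forall>S'\<in>comp_states P. \<forall>C'\<in>chan_contents P.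
        steps P (S, C) (S', C') \<and> C \<in> R S \<longrightarrow> C' \<in> R S')"

end

theory Submission
  imports Defs
begin

(* The sets L(S) of reachable channel contents form a consistent family, recognizable by
   hypothesis, containing C0 at S0 and missing every unreachable C'.  Conversely, a
   consistent family containing C0 at S0 contains every reachable global state, so it can
   exclude C' at S' only if (S', C') is unreachable. *)

lemma S0_in_comp_states:
  assumes "wf_cfsm P"
  shows "S0 P \<in> comp_states P"
  using assms unfolding S0_def comp_states_def wf_cfsm_def by auto

lemma C0_in_chan_contents: "C0 P \<in> chan_contents P"
  unfolding C0_def chan_contents_def by auto

lemma C0_in_reach_chans: "C0 P \<in> reach_chans P (S0 P)"
  unfolding reach_chans_def reachable_def by simp

lemma consistent_reach_chans: "consistent P (reach_chans P)"
  unfolding consistent_def reach_chans_def reachable_def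
  by (auto intro: rtranclp_trans)

lemma reachable_in_consistent:
  assumes "wf_cfsm P" and "consistent P R" and "C0 P \<in> R (S0 P)"
    and "S \<in> comp_states P" and "C \<in> chan_contents P"
    and "reachable P S C"
  shows "C \<in> R S"
  using assms S0_in_comp_states C0_in_chan_contents
  unfolding consistent_def reachable_def by blast

theorem theorem9p5:
  fixes P :: "('n, 'e, 'm, 's) cfsm"
    and S' :: "'n \<Rightarrow> 's" and C' :: "'e \<Rightarrow> 'm list"
  assumes "wf_cfsm P"
    and "recognizable_channel_property P"
    and "S' \<in> comp_states P" and "C' \<in> chan_contents P"
  shows "\<not> reachable P S' C' \<longleftrightarrow>
    (\<exists>R. (\<forall>S\<in>comp_states P. recognizable P (R S)) \<and> consistent P R \<and>
         C0 P \<in> R (S0 P) \<and> C' \<notin> R S')"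
proof
  assume "\<not> reachable P S' C'"
  then have "C' \<notin> reach_chans P S'"
    unfolding reach_chans_def by simp
  moreover have "\<forall>S\<in>comp_states P. recognizable P (reach_chans P S)"
    using assms(2) unfolding recognizable_channel_property_def .
  ultimately show "\<exists>R. (\<forall>S\<in>comp_states P. recognizable P (R S)) \<and> consistent P R \<and>
         C0 P \<in> R (S0 P) \<and> C' \<notin> R S'"
    using consistent_reach_chans C0_in_reach_chans by blast
next
  assume "\<exists>R. (\<forall>S\<in>comp_states P. recognizable P (R S)) \<and> consistent P R \<and>
         C0 P \<in> R (S0 P) \<and> C' \<notin> R S'"
  then obtain R where "consistent P R" and "C0 P \<in> R (S0 P)" and "C' \<notin> R S'"
    by blast
  then show "\<not> reachable P S' C'"
    using reachable_in_consistent assms(1,3,4) by blast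
qed

end
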